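(* (1) Suppose there are a function $D:\mathbb{N}\rightarrow\mathbb{R}_{>0}$ and a constant $C>0$ such that for every $n$, every (possibly partial) Boolean function $F:X\rightarrow\{0,1\}$ with $X\subseteq\{0,1\}^n$, and every nondeterministic quantum query algorithm for $F$ using $T$ queries, there is a nondeterministic quantum communication protocol for $F^{\oplus}$ using at most $C\,D(n)\,T$ qubits. Then $D(n)=\Omega(\log n)$, i.e., there is $c>0$ with $D(n)\ge c\log n$ for all sufficiently large $n$. The same conclusion holds with "nondeterministic" replaced throughout by "exact". (2) Suppose there are a function $D:\mathbb{N}\rightarrow\mathbb{R}_{>0}$ and a constant $C>0$ such that for every $n$, every $F:\{0,1\}^n\rightarrow\{0,1\}$, and every unbounded error quantum query algorithm for $F$ using $T$ queries, there is an unbounded error quantum communication protocol for $F^{\wedge}$ using at most $C\,D(n)\,T$ qubits. Then $D(n)=\Omega(\log n)$.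
   Context: A quantum query algorithm for $F$ alternates input-independent unitaries with the oracle $O_x:|i,b,z\rangle\mapsto|i,b\oplus x_i,z\rangle$ and measures an output bit. It is exact if it always outputs $F(x)$; nondeterministic if for every input in the domain it outputs 1 with positive probability exactly when $F(x)=1$; unbounded error if on every input in the domain it outputs $F(x)$ with probability strictly greater than $1/2$. Quantum communication protocols are two-party protocols exchanging qubits, with the same three correctness notions relative to the distributed function. For $F$ on $n$ bits, $F^{\oplus}(x,y)=F(x\oplus y)$ (Alice holds $x$, Bob holds $y$; defined when $x\oplus y$ is in the domain of $F$) and $F^{\wedge}(x,y)=F(x\wedge y)$ with bitwise AND. *)

theory Defs
  imports Complex_Main "Jordan_Normal_Form.Schur_Decomposition"
begin

definition unitary_mat :: "nat \<Rightarrow> complex mat \<Rightarrow> bool" where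
  "unitary_mat d U \<longleftrightarrow> U \<in> carrier_mat d d \<and> mat_adjoint U * U = 1\<^sub>m d"

definition exact_comp :: "'a set \<Rightarrow> ('a \<Rightarrow> bool) \<Rightarrow> ('a \<Rightarrow> real) \<Rightarrow> bool" where
  "exact_comp Dom G p \<longleftrightarrow> (\<forall>z\<in>Dom. p z = (if G z then 1 else 0))"

definition nondet_comp :: "'a set \<Rightarrow> ('a \<Rightarrow> bool) \<Rightarrow> ('a \<Rightarrow> real) \<Rightarrow> bool" where
  "nondet_comp Dom G p \<longleftrightarrow> (\<forall>z\<in>Dom. (p z > 0 \<longleftrightarrow> G z))"

definition unbounded_comp :: "'a set \<Rightarrow> ('a \<Rightarrow> bool) \<Rightarrow> ('a \<Rightarrow> real) \<Rightarrow> bool" where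
  "unbounded_comp Dom G p \<longleftrightarrow> (\<forall>z\<in>Dom. (if G z then p z > 1/2 else 1 - p z > 1/2))"

text \<open>Inputs are Boolean lists of length n. The state space is spanned by
  basis states |i,b,z> with i < n (index register), b < 2 (output/target bit),
  z < m (workspace); |i,b,z> has index (i*2+b)*m+z.\<close>

definition qdim :: "nat \<Rightarrow> nat \<Rightarrow> nat" where
  "qdim n m = n * 2 * m"

definition qflip :: "nat \<Rightarrow> bool list \<Rightarrow> nat \<Rightarrow> nat" where
  "qflip m x s = (let i = s div (2*m); c = (s div m) mod 2 in
      if x ! i then (if c = 0 then s + m else s - m) else s)"

text \<open>The query_op O_x : |i,b,z> -> |i, b xor x_i, z>.\<close>
definition query_op :: "nat \<Rightarrow> nat \<Rightarrow> bool list \<Rightarrow> complex mat" where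
  "query_op n m x = mat (qdim n m) (qdim n m) (\<lambda>(r,s). if r = qflip m x s then 1 else 0)"

fun qstate :: "nat \<Rightarrow> nat \<Rightarrow> (nat \<Rightarrow> complex mat) \<Rightarrow> bool list \<Rightarrow> nat \<Rightarrow> complex vec" where
  "qstate n m U x 0 = U 0 *\<^sub>v unit_vec (qdim n m) 0"
| "qstate n m U x (Suc t) = U (Suc t) *\<^sub>v (query_op n m x *\<^sub>v qstate n m U x t)"

text \<open>Probability that measuring the output bit b after T queries gives 1.\<close>
definition qprob1 :: "nat \<Rightarrow> nat \<Rightarrow> (nat \<Rightarrow> complex mat) \<Rightarrow> nat \<Rightarrow> bool list \<Rightarrow> real" where
  "qprob1 n m U T x = (\<Sum>r\<in>{r. r < qdim n m \<and> odd (r div m)}. (cmod (qstate n m U x T $ r))\<^sup>2)"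

definition qalg_valid :: "nat \<Rightarrow> nat \<Rightarrow> nat \<Rightarrow> (nat \<Rightarrow> complex mat) \<Rightarrow> bool" where
  "qalg_valid n m T U \<longleftrightarrow> m \<ge> 1 \<and> (\<forall>t\<le>T. unitary_mat (qdim n m) (U t))"

text \<open>Alice's private register has dimension pa, a one-qubit channel C, Bob's
  private register has dimension pb; basis state |i,c,j> has index
  (i*2+c)*pb+j. There are nmsg+1 rounds 0..nmsg; in round t the party holding
  the channel qubit applies a unitary (depending on its own input) to its private
  register together with the channel qubit, and then (if t < nmsg) sends the
  channel qubit to the other party. Thus nmsg qubits are communicated. After the
  last round the channel qubit is measured and gives the output.\<close>

record qprotocol =
  pa :: nat
  pb :: nat
  alice_first :: bool
  nmsg :: nat
  ua :: "nat \<Rightarrow> bool list \<Rightarrow> complex mat"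
  ub :: "nat \<Rightarrow> bool list \<Rightarrow> complex mat"

definition alice_acts :: "qprotocol \<Rightarrow> nat \<Rightarrow> bool" where
  "alice_acts P t \<longleftrightarrow> (even t \<longleftrightarrow> alice_first P)"

definition pdim :: "qprotocol \<Rightarrow> nat" where
  "pdim P = pa P * 2 * pb P"

text \<open>U on A\<otimes>C lifted to A\<otimes>C\<otimes>B (U \<otimes> I_B).\<close>
definition liftA :: "nat \<Rightarrow> nat \<Rightarrow> complex mat \<Rightarrow> complex mat" where
  "liftA a b U = mat (a*2*b) (a*2*b)
     (\<lambda>(r,s). if r mod b = s mod b then U $$ (r div b, s div b) else 0)"

text \<open>V on C\<otimes>B lifted to A\<otimes>C\<otimes>B (I_A \<otimes> V).\<close>
definition liftB :: "nat \<Rightarrow> nat \<Rightarrow> complex mat \<Rightarrow> complex mat" where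
  "liftB a b V = mat (a*2*b) (a*2*b)
     (\<lambda>(r,s). if r div (2*b) = s div (2*b) then V $$ (r mod (2*b), s mod (2*b)) else 0)"

definition pstep :: "qprotocol \<Rightarrow> bool list \<Rightarrow> bool list \<Rightarrow> nat \<Rightarrow> complex mat" where
  "pstep P x y t = (if alice_acts P t then liftA (pa P) (pb P) (ua P t x)
                    else liftB (pa P) (pb P) (ub P t y))"

fun pstate :: "qprotocol \<Rightarrow> bool list \<Rightarrow> bool list \<Rightarrow> nat \<Rightarrow> complex vec" where
  "pstate P x y 0 = pstep P x y 0 *\<^sub>v unit_vec (pdim P) 0"
| "pstate P x y (Suc t) = pstep P x y (Suc t) *\<^sub>v pstate P x y t"

definition pprob1 :: "qprotocol \<Rightarrow> bool list \<times> bool list \<Rightarrow> real" where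
  "pprob1 P xy = (\<Sum>r\<in>{r. r < pdim P \<and> odd (r div pb P)}.
       (cmod (pstate P (fst xy) (snd xy) (nmsg P) $ r))\<^sup>2)"

definition qprot_valid :: "nat \<Rightarrow> qprotocol \<Rightarrow> bool" where
  "qprot_valid n P \<longleftrightarrow> pa P \<ge> 1 \<and> pb P \<ge> 1 \<and>
     (\<forall>t\<le>nmsg P. \<forall>x y. length x = n \<and> length y = n \<longrightarrow>
        (if alice_acts P t then unitary_mat (2 * pa P) (ua P t x)
         else unitary_mat (2 * pb P) (ub P t y)))"

definition xor_list :: "bool list \<Rightarrow> bool list \<Rightarrow> bool list" where
  "xor_list x y = map2 (\<noteq>) x y"

definition and_list :: "bool list \<Rightarrow> bool list \<Rightarrow> bool list" where
  "and_list x y = map2 (\<and>) x y"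

definition xor_dom :: "nat \<Rightarrow> bool list set \<Rightarrow> (bool list \<times> bool list) set" where
  "xor_dom n X = {(x,y). length x = n \<and> length y = n \<and> xor_list x y \<in> X}"

definition xor_fun :: "(bool list \<Rightarrow> bool) \<Rightarrow> bool list \<times> bool list \<Rightarrow> bool" where
  "xor_fun F xy = F (xor_list (fst xy) (snd xy))"

definition and_dom :: "nat \<Rightarrow> (bool list \<times> bool list) set" where
  "and_dom n = {(x,y). length x = n \<and> length y = n}"

definition and_fun :: "(bool list \<Rightarrow> bool) \<Rightarrow> bool list \<times> bool list \<Rightarrow> bool" where
  "and_fun F xy = F (and_list (fst xy) (snd xy))"

end

theory Submission
  imports Defs
begin

(* A protocol exchanging t qubits has acceptance probability p(x,y) = \<Sum>\<^sub>j\<^sub>\<in>\<^sub>J a\<^sub>j(x) b\<^sub>j(y) with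
   |J| = 2 * 4^t: each amplitude of the final state is a sum of 2^t products of a term depending
   only on x and a term depending only on y, because every message doubles the number of
   terms.

   (1) A one-query Deutsch-Jozsa algorithm decides exactly whether the first L = 2^k bits of the
   input are all zero, under the promise that they are all zero or balanced. For Hadamard
   codewords h_a, h_b of length 2^k the word h_a XOR h_b is zero if a = b and balanced otherwise,
   so a nondeterministic protocol for the XOR-lifted problem has p(h_a,h_b) = 0 exactly when
   a \<noteq> b. The 2^k \<times> 2^k matrix (p(h_a,h_b)) is then diagonal with nonzero diagonal, hence
   2^k \<le> 2 * 4^t.

   (2) A one-query unbounded-error algorithm computes OR of n bits. Since OR(x AND e_i) = x_i, the
   sign pattern of the matrix p(x, e_i) - 1/2 realises every subset of {0..<n}, and a real
   matrix of rank r has at most r + 1 columns with this property, hence n \<le> 2 * 4^t + 1.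

   In both cases t \<le> C D(n) for a one-query algorithm, so ln n = O(D(n)). *)

lemma sum_lessThan_mult:
  fixes f :: "nat \<Rightarrow> 'a::comm_monoid_add"
  shows "(\<Sum>r<k*q. f r) = (\<Sum>i<k. \<Sum>c<q. f (i*q+c))"
proof -
  have "(\<Sum>r<k*q. f r) = (\<Sum>i<k. \<Sum>r\<in>{i*q..<i*q+q}. f r)"
    by (rule sum.nat_group[symmetric])
  also have "\<dots> = (\<Sum>i<k. \<Sum>c<q. f (i*q+c))"
    by (rule sum.cong[OF refl]) (simp add: sum.atLeastLessThan_shift_0 atLeast0LessThan add.commute)
  finally show ?thesis .
qed

lemma mult_add_less_mult:
  fixes l c k q :: nat
  assumes "l < k" "c < q"
  shows "l*q + c < k*q"
proof -
  have "l*q + c < Suc l * q" using assms(2) by simp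
  also have "\<dots> \<le> k*q" using assms(1) by (intro mult_le_mono1) simp
  finally show ?thesis .
qed

lemma sum_swap_2_2:
  fixes Y :: "'i \<Rightarrow> 'j \<Rightarrow> 's \<Rightarrow> 't \<Rightarrow> 'a::comm_monoid_add"
  shows "(\<Sum>i\<in>A. \<Sum>j\<in>B. \<Sum>s\<in>S. \<Sum>t\<in>T. Y i j s t) = (\<Sum>s\<in>S. \<Sum>t\<in>T. \<Sum>i\<in>A. \<Sum>j\<in>B. Y i j s t)"
  by (simp only: sum.swap[of _ B S] sum.swap[of _ B T] sum.swap[of _ A S] sum.swap[of _ A T])

lemma sum_swap_3:
  fixes X :: "'i \<Rightarrow> 'c \<Rightarrow> 's \<Rightarrow> 'a::comm_monoid_add"
  shows "(\<Sum>i\<in>A. \<Sum>c\<in>B. \<Sum>s\<in>S. X i c s) = (\<Sum>s\<in>S. \<Sum>c\<in>B. \<Sum>i\<in>A. X i c s)"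
  by (simp only: sum.swap[of _ B S] sum.swap[of _ A S] sum.swap[of _ A B])

lemma sum_lessThan_2: "(\<Sum>c<2. f c) = f 0 + f (1::nat)"
  by (simp add: numeral_2_eq_2)

lemma less_4_cases: "(c::nat) < 4 \<Longrightarrow> c = 0 \<or> c = 1 \<or> c = 2 \<or> c = 3"
  by auto

lemma sum_lessThan_4: "(\<Sum>c<4. f c) = f 0 + f 1 + f 2 + f (3::nat)"
  by (simp add: eval_nat_numeral)

lemma sum_odd_middle_digit:
  fixes a b :: nat
  shows "(\<Sum>r\<in>{r. r < a*2*b \<and> odd (r div b)}. h r) = (\<Sum>i<a. \<Sum>j<b. h ((i*2+1)*b+j))"
proof -
  have "(\<Sum>r\<in>{r. r < a*2*b \<and> odd (r div b)}. h r) = (\<Sum>r<a*2*b. if odd (r div b) then h r else 0)"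
    by (simp add: sum.inter_filter[symmetric] conj_commute)
  also have "\<dots> = (\<Sum>i<a. \<Sum>c<2. \<Sum>j<b. if odd (i*2+c) then h ((i*2+c)*b+j) else 0)"
    by (simp add: sum_lessThan_mult)
  also have "\<dots> = (\<Sum>i<a. \<Sum>j<b. h ((i*2+1)*b+j))"
    by (simp add: sum_lessThan_2)
  finally show ?thesis .
qed

lemma mult_mat_vec_nth:
  "i < dim_row A \<Longrightarrow> dim_col A = dim_vec v \<Longrightarrow> (A *\<^sub>v v) $ i = (\<Sum>j<dim_vec v. A $$ (i,j) * v $ j)"
  by (simp add: scalar_prod_def lessThan_atLeast0)

lemma mult_unit_vec_nth:
  fixes A :: "'a::comm_ring_1 mat"
  shows "i < dim_row A \<Longrightarrow> dim_col A = n \<Longrightarrow> k < n \<Longrightarrow> (A *\<^sub>v unit_vec n k) $ i = A $$ (i,k)"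
  by (subst mult_mat_vec_nth) (auto simp: if_distrib cong: if_cong)

lemma exists_nontrivial_vanishing_combination:
  fixes v :: "'i \<Rightarrow> 'j \<Rightarrow> real"
  assumes "finite J" "finite I" "card J < card I"
  shows "\<exists>lam. (\<exists>k\<in>I. lam k \<noteq> 0) \<and> (\<forall>j\<in>J. (\<Sum>k\<in>I. lam k * v k j) = 0)"
  using assms
proof (induction J arbitrary: I v rule: finite_induct)
  case empty
  then obtain k where "k \<in> I" by fastforce
  then show ?case by (intro exI[of _ "\<lambda>_. 1"]) auto
next
  case (insert j0 J)
  show ?case
  proof (cases "\<exists>k0\<in>I. v k0 j0 \<noteq> 0")
    case False
    then show ?thesis using insert.IH[OF insert.prems(1), of v] insert.hyps insert.prems by auto
  next
    case True
    then obtain k0 where k0: "k0 \<in> I" "v k0 j0 \<noteq> 0" by blast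
    define I' where "I' = I - {k0}"
    define w where "w k j = v k j - v k j0 / v k0 j0 * v k0 j" for k j
    have "card J < card I'" using insert k0 by (simp add: I'_def)
    with insert.IH[of I' w] obtain mu where
      mu: "\<exists>k\<in>I'. mu k \<noteq> 0" "\<forall>j\<in>J. (\<Sum>k\<in>I'. mu k * w k j) = 0"
      using insert.prems by (auto simp: I'_def)
    define lam where "lam = mu(k0 := - (\<Sum>k\<in>I'. mu k * v k j0) / v k0 j0)"
    have comb: "(\<Sum>k\<in>I. lam k * v k j) = (\<Sum>k\<in>I'. mu k * w k j)" for j
    proof -
      have "(\<Sum>k\<in>I. lam k * v k j) = lam k0 * v k0 j + (\<Sum>k\<in>I'. mu k * v k j)"
        using insert.prems(1) k0 by (simp add: I'_def lam_def sum.remove)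
      then show ?thesis
        by (simp add: lam_def w_def right_diff_distrib sum_subtractf sum_distrib_left
            sum_distrib_right sum_divide_distrib mult_ac)
    qed
    have "(\<Sum>k\<in>I'. mu k * w k j0) = 0" using k0 by (simp add: w_def)
    then show ?thesis
      using mu comb by (intro exI[of _ lam]) (auto simp: lam_def I'_def)
  qed
qed

lemma card_le_of_diagonal_product:
  fixes a b :: "'j \<Rightarrow> 'i \<Rightarrow> real"
  assumes "finite J" "finite I"
    and diag: "\<And>k l. k \<in> I \<Longrightarrow> l \<in> I \<Longrightarrow> (\<Sum>j\<in>J. a j k * b j l) = 0 \<longleftrightarrow> k \<noteq> l"
  shows "card I \<le> card J"
proof (rule ccontr)
  assume "\<not> card I \<le> card J"
  then obtain lam where lam: "\<exists>k\<in>I. lam k \<noteq> 0" "\<forall>j\<in>J. (\<Sum>k\<in>I. lam k * a j k) = 0"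
    using exists_nontrivial_vanishing_combination[OF assms(1,2), of "\<lambda>k j. a j k"] by auto
  then obtain l where l: "l \<in> I" "lam l \<noteq> 0" by blast
  have "0 = (\<Sum>j\<in>J. (\<Sum>k\<in>I. lam k * a j k) * b j l)" using lam(2) by simp
  also have "\<dots> = (\<Sum>k\<in>I. lam k * (\<Sum>j\<in>J. a j k * b j l))"
    by (simp add: sum_distrib_left sum_distrib_right sum.swap[of _ I] mult.assoc)
  also have "\<dots> = lam l * (\<Sum>j\<in>J. a j l * b j l)"
    using l diag assms(2) by (intro sum.remove[THEN trans]) (auto intro!: sum.neutral)
  finally show False using diag[OF l(1) l(1)] l(2) by simp
qed

lemma card_le_of_all_sign_patterns:
  fixes a :: "'j \<Rightarrow> 'x \<Rightarrow> real" and b :: "'j \<Rightarrow> nat \<Rightarrow> real"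
  assumes "finite J"
    and patterns: "\<And>S. S \<subseteq> {..<n} \<Longrightarrow> \<exists>x. \<forall>i<n.
      (i \<in> S \<longrightarrow> (\<Sum>j\<in>J. a j x * b j i) > 1/2) \<and> (i \<notin> S \<longrightarrow> (\<Sum>j\<in>J. a j x * b j i) < 1/2)"
  shows "n \<le> card J + 1"
proof (rule ccontr)
  assume "\<not> n \<le> card J + 1"
  define J' where "J' = insert None (Some ` J)"
  define v where "v i = case_option 1 (\<lambda>j. b j i)" for i
  have "card J' < card {..<n}"
    using \<open>\<not> n \<le> card J + 1\<close> assms(1) by (simp add: J'_def card_image)
  then obtain lam where lam: "\<exists>k<n. lam k \<noteq> 0" "\<forall>j\<in>J'. (\<Sum>k<n. lam k * v k j) = 0"
    using exists_nontrivial_vanishing_combination[of J' "{..<n}" v] assms(1) by (auto simp: J'_def)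
  have sum_lam: "(\<Sum>k<n. lam k) = 0" using lam(2) by (auto simp: J'_def v_def)
  have sum_lam_b: "(\<Sum>k<n. lam k * b j k) = 0" if "j \<in> J" for j
    using lam(2) that by (auto simp: J'_def v_def)
  obtain x where x: "\<forall>i<n. (0 < lam i \<longrightarrow> (\<Sum>j\<in>J. a j x * b j i) > 1/2) \<and>
      (\<not> 0 < lam i \<longrightarrow> (\<Sum>j\<in>J. a j x * b j i) < 1/2)"
    using patterns[of "{k. k < n \<and> lam k > 0}"] by auto
  define p where "p i = (\<Sum>j\<in>J. a j x * b j i) - 1/2" for i
  have pos: "0 < lam k * p k" if "k < n" "lam k \<noteq> 0" for k
    using x that by (cases "lam k > 0") (auto simp: p_def intro: mult_pos_pos mult_neg_neg)
  have "(\<Sum>k<n. lam k * p k) = (\<Sum>j\<in>J. a j x * (\<Sum>k<n. lam k * b j k)) - (\<Sum>k<n. lam k) / 2"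
    by (simp add: p_def right_diff_distrib sum_subtractf sum_distrib_left sum.swap[of _ "{..<n}"]
        sum_divide_distrib mult_ac)
  also have "\<dots> = 0" using sum_lam sum_lam_b by simp
  finally have zero: "(\<Sum>k<n. lam k * p k) = 0" .
  have nonneg: "0 \<le> lam k * p k" if "k < n" for k
    using pos[OF that] by (cases "lam k = 0") auto
  obtain k0 where "k0 < n" "lam k0 \<noteq> 0" using lam(1) by blast
  then have "0 < (\<Sum>k<n. lam k * p k)"
    using pos nonneg by (intro sum_pos2[of _ k0]) auto
  with zero show False by simp
qed

section \<open>The acceptance probability of a protocol has low rank\<close>

lemma liftA_mult_vec_nth:
  assumes "dim_vec v = a*2*b" "p < a*2" "j < b"
  shows "(liftA a b U *\<^sub>v v) $ (p*b+j) = (\<Sum>q<a*2. U $$ (p,q) * v $ (q*b+j))"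
proof -
  have "(liftA a b U *\<^sub>v v) $ (p*b+j) = (\<Sum>r<a*2*b. liftA a b U $$ (p*b+j, r) * v $ r)"
    using assms by (subst mult_mat_vec_nth) (auto simp: liftA_def mult_add_less_mult)
  also have "\<dots> = (\<Sum>q<a*2. \<Sum>j'<b. liftA a b U $$ (p*b+j, q*b+j') * v $ (q*b+j'))"
    by (rule sum_lessThan_mult)
  also have "\<dots> = (\<Sum>q<a*2. U $$ (p,q) * v $ (q*b+j))"
    using assms by (simp add: liftA_def mult_add_less_mult if_distrib[of "\<lambda>z. z * _"] cong: if_cong)
  finally show ?thesis .
qed

lemma liftB_mult_vec_nth:
  assumes "dim_vec v = a*2*b" "i < a" "d < 2*b"
  shows "(liftB a b V *\<^sub>v v) $ (i*(2*b)+d) = (\<Sum>d'<2*b. V $$ (d,d') * v $ (i*(2*b)+d'))"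
proof -
  have "(liftB a b V *\<^sub>v v) $ (i*(2*b)+d) = (\<Sum>r<a*(2*b). liftB a b V $$ (i*(2*b)+d, r) * v $ r)"
    using assms by (subst mult_mat_vec_nth) (auto simp: liftB_def mult_add_less_mult mult.assoc)
  also have "\<dots> = (\<Sum>i'<a. \<Sum>d'<2*b. liftB a b V $$ (i*(2*b)+d, i'*(2*b)+d') * v $ (i'*(2*b)+d'))"
    by (rule sum_lessThan_mult)
  also have "\<dots> = (\<Sum>i'<a. if i' = i then (\<Sum>d'<2*b. V $$ (d,d') * v $ (i*(2*b)+d')) else 0)"
    using assms by (intro sum.cong refl) (auto simp: liftB_def mult_add_less_mult mult.assoc)
  also have "\<dots> = (\<Sum>d'<2*b. V $$ (d,d') * v $ (i*(2*b)+d'))"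
    using assms by simp
  finally show ?thesis .
qed

definition product_decomposition ::
    "nat \<Rightarrow> nat \<Rightarrow> nat \<Rightarrow> (bool list \<Rightarrow> bool list \<Rightarrow> complex vec) \<Rightarrow> bool" where
  "product_decomposition a b K v \<longleftrightarrow> (\<exists>F G. \<forall>x y i c j. i < a \<longrightarrow> c < 2 \<longrightarrow> j < b \<longrightarrow>
     v x y $ ((i*2+c)*b+j) = (\<Sum>s<K. F s x i c * G s y c j))"

lemma product_decomposition_liftA:
  assumes "product_decomposition a b K v" and dim: "\<And>x y. dim_vec (v x y) = a*2*b"
  shows "product_decomposition a b (K*2) (\<lambda>x y. liftA a b (U x) *\<^sub>v v x y)"
proof -
  obtain F G where FG: "\<And>x y i c j. i < a \<Longrightarrow> c < 2 \<Longrightarrow> j < b \<Longrightarrow>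
      v x y $ ((i*2+c)*b+j) = (\<Sum>s<K. F s x i c * G s y c j)"
    using assms(1) unfolding product_decomposition_def by blast
  define F' where "F' s x i c = (\<Sum>i'<a. U x $$ (i*2+c, i'*2 + s mod 2) * F (s div 2) x i' (s mod 2))"
    for s x i c
  define G' where "G' s y (c::nat) j = G (s div 2) y (s mod 2) j" for s y c j
  have "(liftA a b (U x) *\<^sub>v v x y) $ ((i*2+c)*b+j) = (\<Sum>s<K*2. F' s x i c * G' s y c j)"
    if "i < a" "c < 2" "j < b" for x y i c j
  proof -
    have "(liftA a b (U x) *\<^sub>v v x y) $ ((i*2+c)*b+j) =
        (\<Sum>i'<a. \<Sum>c'<2. U x $$ (i*2+c, i'*2+c') * v x y $ ((i'*2+c')*b+j))"
      using that dim by (simp add: liftA_mult_vec_nth mult_add_less_mult sum_lessThan_mult)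
    also have "\<dots> = (\<Sum>i'<a. \<Sum>c'<2. \<Sum>s<K. U x $$ (i*2+c, i'*2+c') * (F s x i' c' * G s y c' j))"
      using that by (simp add: FG sum_distrib_left)
    also have "\<dots> = (\<Sum>s<K. \<Sum>c'<2. \<Sum>i'<a. U x $$ (i*2+c, i'*2+c') * (F s x i' c' * G s y c' j))"
      by (rule sum_swap_3)
    also have "\<dots> = (\<Sum>s<K. \<Sum>c'<2. F' (s*2+c') x i c * G' (s*2+c') y c j)"
      by (simp add: F'_def G'_def sum_distrib_right mult.assoc)
    also have "\<dots> = (\<Sum>s<K*2. F' s x i c * G' s y c j)"
      by (rule sum_lessThan_mult[symmetric])
    finally show ?thesis .
  qed
  then show ?thesis unfolding product_decomposition_def by blast
qed

lemma product_decomposition_liftB: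
  assumes "product_decomposition a b K v" and dim: "\<And>x y. dim_vec (v x y) = a*2*b"
  shows "product_decomposition a b (K*2) (\<lambda>x y. liftB a b (V y) *\<^sub>v v x y)"
proof -
  obtain F G where FG: "\<And>x y i c j. i < a \<Longrightarrow> c < 2 \<Longrightarrow> j < b \<Longrightarrow>
      v x y $ ((i*2+c)*b+j) = (\<Sum>s<K. F s x i c * G s y c j)"
    using assms(1) unfolding product_decomposition_def by blast
  define F' where "F' s x i (c::nat) = F (s div 2) x i (s mod 2)" for s x i c
  define G' where "G' s y c j = (\<Sum>j'<b. V y $$ (c*b+j, (s mod 2)*b+j') * G (s div 2) y (s mod 2) j')"
    for s y c j
  have "(liftB a b (V y) *\<^sub>v v x y) $ ((i*2+c)*b+j) = (\<Sum>s<K*2. F' s x i c * G' s y c j)"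
    if "i < a" "c < 2" "j < b" for x y i c j
  proof -
    have idx: "(i'*2+c')*b+j' = i'*(2*b) + (c'*b+j')" for i' c' j' :: nat
      by (simp add: algebra_simps)
    have "(liftB a b (V y) *\<^sub>v v x y) $ ((i*2+c)*b+j) =
        (\<Sum>d'<2*b. V y $$ (c*b+j, d') * v x y $ (i*(2*b)+d'))"
      unfolding idx using that dim by (intro liftB_mult_vec_nth) (simp_all add: mult_add_less_mult)
    also have "\<dots> = (\<Sum>c'<2. \<Sum>j'<b. V y $$ (c*b+j, c'*b+j') * v x y $ ((i*2+c')*b+j'))"
      unfolding idx by (rule sum_lessThan_mult)
    also have "\<dots> = (\<Sum>c'<2. \<Sum>j'<b. \<Sum>s<K. V y $$ (c*b+j, c'*b+j') * (F s x i c' * G s y c' j'))"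
      using that by (simp add: FG sum_distrib_left)
    also have "\<dots> = (\<Sum>s<K. \<Sum>c'<2. \<Sum>j'<b. V y $$ (c*b+j, c'*b+j') * (F s x i c' * G s y c' j'))"
      by (simp only: sum.swap[of _ "{..<b}" "{..<K}"] sum.swap[of _ "{..<2}" "{..<K}"])
    also have "\<dots> = (\<Sum>s<K. \<Sum>c'<2. F' (s*2+c') x i c * G' (s*2+c') y c j)"
      by (simp add: F'_def G'_def sum_distrib_left mult_ac)
    also have "\<dots> = (\<Sum>s<K*2. F' s x i c * G' s y c j)"
      by (rule sum_lessThan_mult[symmetric])
    finally show ?thesis .
  qed
  then show ?thesis unfolding product_decomposition_def by blast
qed

lemma dim_pstate: "dim_vec (pstate P x y t) = pdim P"
  by (cases t) (auto simp: pstep_def liftA_def liftB_def pdim_def)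

lemma product_decomposition_pstate_0:
  "product_decomposition (pa P) (pb P) 1 (\<lambda>x y. pstate P x y 0)"
proof (cases "alice_acts P 0")
  case True
  have "pstate P x y 0 $ ((i*2+c)*pb P+j) = ua P 0 x $$ (i*2+c, 0) * (if j = 0 then 1 else 0)"
    if "i < pa P" "c < 2" "j < pb P" for x y i c j
  proof -
    have "pstate P x y 0 $ ((i*2+c)*pb P+j) =
        (\<Sum>q<pa P*2. ua P 0 x $$ (i*2+c, q) * unit_vec (pdim P) 0 $ (q*pb P+j))"
      using that True
      by (simp add: pstep_def pdim_def liftA_mult_vec_nth mult_add_less_mult
          del: index_mult_mat_vec index_unit_vec)
    also have "\<dots> =
        (\<Sum>q<pa P*2. if q = 0 then ua P 0 x $$ (i*2+c, q) * (if j = 0 then 1 else 0) else 0)"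
      using that by (intro sum.cong refl) (auto simp: pdim_def mult_add_less_mult)
    finally show ?thesis using that by simp
  qed
  then show ?thesis
    unfolding product_decomposition_def
    by (intro exI[of _ "\<lambda>s x i c. ua P 0 x $$ (i*2+c, 0)"]
        exI[of _ "\<lambda>s y c j. if j = 0 then 1 else 0"]) simp
next
  case False
  have "pstate P x y 0 $ ((i*2+c)*pb P+j) = (if i = 0 then 1 else 0) * ub P 0 y $$ (c*pb P+j, 0)"
    if "i < pa P" "c < 2" "j < pb P" for x y i c j
  proof -
    have idx: "(i*2+c)*pb P+j = i*(2*pb P) + (c*pb P+j)" by (simp add: algebra_simps)
    have "pstate P x y 0 $ ((i*2+c)*pb P+j) =
        (\<Sum>d<2*pb P. ub P 0 y $$ (c*pb P+j, d) * unit_vec (pdim P) 0 $ (i*(2*pb P)+d))"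
      unfolding idx using that False
      by (simp add: pstep_def pdim_def liftB_mult_vec_nth mult_add_less_mult
          del: index_mult_mat_vec index_unit_vec)
    also have "\<dots> =
        (\<Sum>d<2*pb P. if d = 0 then (if i = 0 then 1 else 0) * ub P 0 y $$ (c*pb P+j, d) else 0)"
      using that by (intro sum.cong refl) (auto simp: pdim_def mult_add_less_mult mult.assoc)
    finally show ?thesis using that by simp
  qed
  then show ?thesis
    unfolding product_decomposition_def
    by (intro exI[of _ "\<lambda>s x i c. if i = 0 then 1 else 0"]
        exI[of _ "\<lambda>s y c j. ub P 0 y $$ (c*pb P+j, 0)"]) simp
qed

lemma product_decomposition_pstate:
  "product_decomposition (pa P) (pb P) (2^t) (\<lambda>x y. pstate P x y t)"
proof (induction t)
  case 0
  show ?case using product_decomposition_pstate_0 by simp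
next
  case (Suc t)
  have dim: "dim_vec (pstate P x y t) = pa P * 2 * pb P" for x y
    by (simp add: dim_pstate pdim_def)
  show ?case
  proof (cases "alice_acts P (Suc t)")
    case True
    then have "pstate P x y (Suc t) = liftA (pa P) (pb P) (ua P (Suc t) x) *\<^sub>v pstate P x y t" for x y
      by (simp add: pstep_def)
    then show ?thesis
      unfolding power_Suc2 using product_decomposition_liftA[OF Suc dim] by (simp only:)
  next
    case False
    then have "pstate P x y (Suc t) = liftB (pa P) (pb P) (ub P (Suc t) y) *\<^sub>v pstate P x y t" for x y
      by (simp add: pstep_def)
    then show ?thesis
      unfolding power_Suc2 using product_decomposition_liftB[OF Suc dim] by (simp only:)
  qed
qed

lemma sum_cmod_power2_sum_mult:
  fixes f :: "'s \<Rightarrow> 'i \<Rightarrow> complex" and g :: "'s \<Rightarrow> 'j \<Rightarrow> complex"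
  shows "(\<Sum>i\<in>A. \<Sum>j\<in>B. (cmod (\<Sum>s\<in>S. f s i * g s j))\<^sup>2) =
    (\<Sum>s\<in>S. \<Sum>s'\<in>S. Re ((\<Sum>i\<in>A. f s i * cnj (f s' i)) * (\<Sum>j\<in>B. g s j * cnj (g s' j))))"
proof -
  have norm_sq: "(cmod z)\<^sup>2 = Re (z * cnj z)" for z :: complex
    by (simp flip: complex_norm_square)
  have "(\<Sum>i\<in>A. \<Sum>j\<in>B. (cmod (\<Sum>s\<in>S. f s i * g s j))\<^sup>2) =
      Re (\<Sum>i\<in>A. \<Sum>j\<in>B. \<Sum>s\<in>S. \<Sum>s'\<in>S. f s i * g s j * (cnj (f s' i) * cnj (g s' j)))"
    by (simp only: norm_sq Re_sum cnj_sum complex_cnj_mult sum_product)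
  also have "\<dots> = Re (\<Sum>s\<in>S. \<Sum>s'\<in>S. \<Sum>i\<in>A. \<Sum>j\<in>B. (f s i * cnj (f s' i)) * (g s j * cnj (g s' j)))"
    by (subst sum_swap_2_2) (simp only: mult_ac)
  also have "\<dots> = (\<Sum>s\<in>S. \<Sum>s'\<in>S. Re ((\<Sum>i\<in>A. f s i * cnj (f s' i)) * (\<Sum>j\<in>B. g s j * cnj (g s' j))))"
    by (simp only: Re_sum sum_product)
  finally show ?thesis .
qed

lemma pprob1_eq_sum_amplitudes:
  "pprob1 P (x,y) = (\<Sum>i<pa P. \<Sum>j<pb P. (cmod (pstate P x y (nmsg P) $ ((i*2+1)*pb P+j)))\<^sup>2)"
  unfolding pprob1_def pdim_def by (simp add: sum_odd_middle_digit)

lemma pprob1_nonneg: "0 \<le> pprob1 P xy"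
  by (simp add: pprob1_def sum_nonneg)

lemma pprob1_factorization:
  obtains J :: "(nat \<times> nat \<times> bool) set" and \<alpha> \<beta>
  where "finite J" "card J = 2 * 4^nmsg P" "\<And>x y. pprob1 P (x,y) = (\<Sum>j\<in>J. \<alpha> j x * \<beta> j y)"
proof -
  define K where "K = (2::nat)^nmsg P"
  obtain F G where FG: "\<And>x y i c j. i < pa P \<Longrightarrow> c < 2 \<Longrightarrow> j < pb P \<Longrightarrow>
      pstate P x y (nmsg P) $ ((i*2+c)*pb P+j) = (\<Sum>s<K. F s x i c * G s y c j)"
    using product_decomposition_pstate[of P "nmsg P"] unfolding product_decomposition_def K_def by blast
  define A where "A s s' x = (\<Sum>i<pa P. F s x i 1 * cnj (F s' x i 1))" for s s' x
  define B where "B s s' y = (\<Sum>j<pb P. G s y 1 j * cnj (G s' y 1 j))" for s s' y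
  define J where "J = {..<K} \<times> {..<K} \<times> (UNIV :: bool set)"
  define \<alpha> where "\<alpha> = (\<lambda>(s,s',e) x. if e then Re (A s s' x) else - Im (A s s' x))"
  define \<beta> where "\<beta> = (\<lambda>(s,s',e) y. if e then Re (B s s' y) else Im (B s s' y))"
  show ?thesis
  proof (rule that)
    show "finite J" by (simp add: J_def)
    show "card J = 2 * 4^nmsg P"
      by (simp add: J_def K_def card_cartesian_product flip: power_mult_distrib)
    fix x y
    have "pprob1 P (x,y) = (\<Sum>i<pa P. \<Sum>j<pb P. (cmod (\<Sum>s<K. F s x i 1 * G s y 1 j))\<^sup>2)"
      unfolding pprob1_eq_sum_amplitudes by (intro sum.cong refl, subst FG) auto
    also have "\<dots> = (\<Sum>s<K. \<Sum>s'<K. Re (A s s' x * B s s' y))"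
      unfolding A_def B_def by (rule sum_cmod_power2_sum_mult)
    also have "\<dots> = (\<Sum>s<K. \<Sum>s'<K. \<Sum>e\<in>UNIV. \<alpha> (s,s',e) x * \<beta> (s,s',e) y)"
      by (simp add: \<alpha>_def \<beta>_def UNIV_bool)
    also have "\<dots> = (\<Sum>j\<in>J. \<alpha> j x * \<beta> j y)"
      by (simp add: J_def sum.cartesian_product)
    finally show "pprob1 P (x,y) = (\<Sum>j\<in>J. \<alpha> j x * \<beta> j y)" .
  qed
qed

lemma qindex_cases:
  fixes s n m :: nat
  assumes "s < n*2*m"
  obtains l b z where "l < n" "b < 2" "z < m" "s = (l*2+b)*m+z"
proof
  have "0 < m" using assms by (cases m) auto
  have "s div m < n*2" using assms by (simp add: less_mult_imp_div_less)
  then show "s div m div 2 < n" by (simp add: less_mult_imp_div_less)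
  show "s div m mod 2 < 2" "s mod m < m" using \<open>0 < m\<close> by simp_all
  show "s = (s div m div 2 * 2 + s div m mod 2) * m + s mod m" by simp
qed

lemma qflip_index:
  assumes "b < 2" "z < m"
  shows "qflip m x ((l*2+b)*m+z) = (l*2 + (if x!l then 1-b else b))*m+z"
proof -
  have idx: "(l*2+b)*m+z = l*(2*m) + (b*m+z)" by (simp add: algebra_simps)
  have "b*m+z < 2*m" using assms mult_add_less_mult by blast
  then have "((l*2+b)*m+z) div (2*m) = l" unfolding idx by simp
  moreover have "((l*2+b)*m+z) div m mod 2 = b" using assms by simp
  ultimately show ?thesis
    unfolding qflip_def Let_def using assms by (cases "x!l"; cases b) (simp_all add: algebra_simps)
qed

lemma qflip_bounded: "s < n*2*m \<Longrightarrow> qflip m x s < n*2*m"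
  by (elim qindex_cases) (auto simp: qflip_index mult_add_less_mult)

lemma qflip_qflip:
  assumes "s < n*2*m"
  shows "qflip m x (qflip m x s) = s"
proof -
  obtain l b z where lbz: "b < 2" "z < m" "s = (l*2+b)*m+z" using assms by (elim qindex_cases)
  define b' where "b' = (if x!l then 1-b else b)"
  have "b' < 2" unfolding b'_def using lbz by auto
  have "qflip m x (qflip m x s) = qflip m x ((l*2+b')*m+z)"
    using lbz by (simp add: b'_def qflip_index)
  also have "\<dots> = (l*2 + (if x!l then 1-b' else b'))*m+z"
    using \<open>b' < 2\<close> \<open>z < m\<close> by (rule qflip_index)
  also have "\<dots> = s" using lbz by (simp add: b'_def)
  finally show ?thesis .
qed

lemma query_op_mult_vec_nth:
  assumes "dim_vec v = qdim n m" "l < n" "b < 2" "z < m"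
  shows "(query_op n m x *\<^sub>v v) $ ((l*2+b)*m+z) = v $ ((l*2 + (if x!l then 1-b else b))*m+z)"
proof -
  define r where "r = (l*2+b)*m+z"
  have r: "r < n*2*m" using assms by (simp add: r_def mult_add_less_mult)
  have "(query_op n m x *\<^sub>v v) $ r = (\<Sum>s<n*2*m. (if r = qflip m x s then 1 else 0) * v $ s)"
    using assms r by (subst mult_mat_vec_nth) (auto simp: query_op_def qdim_def)
  also have "\<dots> = (\<Sum>s<n*2*m. if s = qflip m x r then v $ s else 0)"
    using r qflip_qflip by (intro sum.cong refl) auto
  also have "\<dots> = v $ qflip m x r" using r qflip_bounded by simp
  finally show ?thesis using assms by (simp add: r_def qflip_index)
qed

lemma qprob1_eq_sum_amplitudes:
  "qprob1 n m U T x = (\<Sum>l<n. \<Sum>z<m. (cmod (qstate n m U x T $ ((l*2+1)*m+z)))\<^sup>2)"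
  unfolding qprob1_def qdim_def by (rule sum_odd_middle_digit)

section \<open>Unitaries assembled from blocks\<close>

lemma unitary_matI:
  assumes "U \<in> carrier_mat d d"
    and "\<And>i j. i < d \<Longrightarrow> j < d \<Longrightarrow> (\<Sum>k<d. cnj (U $$ (k,i)) * U $$ (k,j)) = (if i = j then 1 else 0)"
  shows "unitary_mat d U"
proof -
  have "mat_adjoint U * U = 1\<^sub>m d"
    using assms by (intro eq_matI) (auto simp: mat_adjoint_def scalar_prod_def lessThan_atLeast0)
  then show ?thesis using assms(1) by (simp add: unitary_mat_def)
qed

(* diag(G 0, ..., G (k - 1)) * (R \<otimes> 1\<^sub>q): the block G l acting on row block l may depend on l. *)
definition kron_mat ::
    "nat \<Rightarrow> nat \<Rightarrow> (nat \<Rightarrow> nat \<Rightarrow> real) \<Rightarrow> (nat \<Rightarrow> nat \<Rightarrow> nat \<Rightarrow> complex) \<Rightarrow> complex mat" where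
  "kron_mat k q R G = mat (k*q) (k*q)
     (\<lambda>(r,s). complex_of_real (R (r div q) (s div q)) * G (r div q) (r mod q) (s mod q))"

lemma kron_mat_index:
  "l < k \<Longrightarrow> c < q \<Longrightarrow> l' < k \<Longrightarrow> c' < q \<Longrightarrow>
   kron_mat k q R G $$ (l*q+c, l'*q+c') = complex_of_real (R l l') * G l c c'"
  by (simp add: kron_mat_def mult_add_less_mult)

lemma kron_mat_unitary:
  assumes R: "\<And>i j. i < k \<Longrightarrow> j < k \<Longrightarrow> (\<Sum>l<k. R l i * R l j) = (if i = j then 1 else 0)"
    and G: "\<And>l a b. l < k \<Longrightarrow> a < q \<Longrightarrow> b < q \<Longrightarrow>
      (\<Sum>c<q. cnj (G l c a) * G l c b) = (if a = b then 1 else 0)"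
  shows "unitary_mat (k*q) (kron_mat k q R G)"
proof (rule unitary_matI)
  show "kron_mat k q R G \<in> carrier_mat (k*q) (k*q)" by (simp add: kron_mat_def)
  fix r s assume "r < k*q" "s < k*q"
  define i a j b where "i = r div q" "a = r mod q" "j = s div q" "b = s mod q"
  have "0 < q" using \<open>r < k*q\<close> by (cases q) auto
  then have ia: "i < k" "a < q" "j < k" "b < q"
    using \<open>r < k*q\<close> \<open>s < k*q\<close> by (auto simp: i_a_j_b_def less_mult_imp_div_less)
  have rs: "r = i*q+a" "s = j*q+b" by (simp_all add: i_a_j_b_def)
  have "(\<Sum>t<k*q. cnj (kron_mat k q R G $$ (t,r)) * kron_mat k q R G $$ (t,s)) =
      (\<Sum>l<k. complex_of_real (R l i * R l j) * (\<Sum>c<q. cnj (G l c a) * G l c b))"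
    unfolding sum_lessThan_mult rs using ia
    by (intro sum.cong refl) (simp add: kron_mat_index sum_distrib_left mult_ac)
  also have "\<dots> = complex_of_real (\<Sum>l<k. R l i * R l j) * (if a = b then 1 else 0)"
    using ia G by (simp add: sum_distrib_right)
  also have "\<dots> = (if r = s then 1 else 0)"
  proof -
    have "r = s \<longleftrightarrow> i = j \<and> a = b" unfolding i_a_j_b_def by (metis div_mult_mod_eq)
    then show ?thesis using R ia by simp
  qed
  finally show "(\<Sum>t<k*q. cnj (kron_mat k q R G $$ (t,r)) * kron_mat k q R G $$ (t,s)) =
      (if r = s then 1 else 0)" .
qed

lemma kron_mat_mult_vec_nth:
  assumes "dim_vec v = k*q" "l < k" "c < q"
  shows "(kron_mat k q R G *\<^sub>v v) $ (l*q+c) =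
    (\<Sum>l'<k. \<Sum>c'<q. complex_of_real (R l l') * G l c c' * v $ (l'*q+c'))"
  using assms
  by (subst mult_mat_vec_nth) (auto simp: kron_mat_def mult_add_less_mult sum_lessThan_mult
      intro!: sum.cong)

lemma kron_mat_mult_unit_vec_0:
  assumes "l < k" "c < q"
  shows "(kron_mat k q R G *\<^sub>v unit_vec (k*q) 0) $ (l*q+c) = complex_of_real (R l 0) * G l c 0"
proof -
  have "(kron_mat k q R G *\<^sub>v unit_vec (k*q) 0) $ (l*q+c) = kron_mat k q R G $$ (l*q+c, 0*q+0)"
    using assms by (subst mult_unit_vec_nth) (auto simp: kron_mat_def mult_add_less_mult)
  also have "\<dots> = complex_of_real (R l 0) * G l c 0"
    using assms by (intro kron_mat_index) auto
  finally show ?thesis .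
qed

definition householder :: "nat \<Rightarrow> (nat \<Rightarrow> real) \<Rightarrow> nat \<Rightarrow> nat \<Rightarrow> real" where
  "householder k w i j = (if i = j then 1 else 0) - 2 * w i * w j / (\<Sum>l<k. (w l)\<^sup>2)"

lemma householder_sym: "householder k w i j = householder k w j i"
  by (simp add: householder_def mult_ac)

lemma householder_orthogonal:
  assumes "(\<Sum>l<k. (w l)\<^sup>2) \<noteq> 0" "i < k" "j < k"
  shows "(\<Sum>l<k. householder k w l i * householder k w l j) = (if i = j then 1 else 0)"
proof -
  define N where "N = (\<Sum>l<k. (w l)\<^sup>2)"
  define c where "c = 2 / N"
  have H: "householder k w a b = (if a = b then 1 else 0) - c * w a * w b" for a b
    by (simp add: householder_def c_def N_def)
  have "householder k w l i * householder k w l j =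
      (if l = i then (if i = j then 1 else 0) else 0) - (if l = j then c * w l * w i else 0)
      - (if l = i then c * w l * w j else 0) + c\<^sup>2 * w i * w j * (w l)\<^sup>2" for l
    unfolding H by (auto simp: algebra_simps power2_eq_square)
  then have sum_eq: "(\<Sum>l<k. householder k w l i * householder k w l j) =
      (if i = j then 1 else 0) - 2 * c * w i * w j + c\<^sup>2 * w i * w j * N"
    using assms(2,3) by (simp add: sum.distrib sum_subtractf sum_distrib_left[symmetric] N_def mult_ac)
  have "c\<^sup>2 * N = 2 * c" using assms(1) by (simp add: c_def N_def power2_eq_square)
  then have "c\<^sup>2 * w i * w j * N = 2 * c * w i * w j" by (simp add: mult_ac)
  with sum_eq show ?thesis by simp
qed

lemma householder_e0_minus:
  assumes "0 < k" "(\<Sum>l<k. (u l)\<^sup>2) = 1" "u 0 \<noteq> 1"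
  defines "w \<equiv> \<lambda>l. (if l = 0 then 1 else 0) - u l"
  shows "(\<Sum>l<k. (w l)\<^sup>2) \<noteq> 0" and "householder k w i 0 = u i"
proof -
  have "(w l)\<^sup>2 = (if l = 0 then 1 - 2 * u l else 0) + (u l)\<^sup>2" for l
    by (simp add: w_def power2_eq_square algebra_simps)
  then have N: "(\<Sum>l<k. (w l)\<^sup>2) = 2 - 2 * u 0"
    using assms(1,2) by (simp add: sum.distrib)
  then show "(\<Sum>l<k. (w l)\<^sup>2) \<noteq> 0" using assms(3) by simp
  show "householder k w i 0 = u i"
    using assms(3) unfolding householder_def N by (simp add: w_def field_simps)
qed

definition uniform_vec :: "nat \<Rightarrow> nat \<Rightarrow> real" where
  "uniform_vec L l = (if l < L then 1 / sqrt (real L) else 0)"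

definition uniform_reflection :: "nat \<Rightarrow> nat \<Rightarrow> nat \<Rightarrow> nat \<Rightarrow> real" where
  "uniform_reflection n L = householder n (\<lambda>l. (if l = 0 then 1 else 0) - uniform_vec L l)"

lemma
  assumes "2 \<le> L" "L \<le> n"
  shows uniform_reflection_orthogonal: "\<And>i j. i < n \<Longrightarrow> j < n \<Longrightarrow>
      (\<Sum>l<n. uniform_reflection n L l i * uniform_reflection n L l j) = (if i = j then 1 else 0)"
    and uniform_reflection_col_0: "uniform_reflection n L i 0 = uniform_vec L i"
    and uniform_reflection_row_0: "uniform_reflection n L 0 i = uniform_vec L i"
proof -
  have "(\<Sum>l<n. (uniform_vec L l)\<^sup>2) = (\<Sum>l<L. 1 / real L)"
    using assms by (intro sum.mono_neutral_cong_right) (auto simp: uniform_vec_def power_divide)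
  then have "(\<Sum>l<n. (uniform_vec L l)\<^sup>2) = 1" using assms by simp
  moreover have "uniform_vec L 0 \<noteq> 1" using assms by (simp add: uniform_vec_def)
  moreover have "0 < n" using assms by simp
  ultimately show "\<And>i j. i < n \<Longrightarrow> j < n \<Longrightarrow>
      (\<Sum>l<n. uniform_reflection n L l i * uniform_reflection n L l j) = (if i = j then 1 else 0)"
    and "uniform_reflection n L i 0 = uniform_vec L i"
    using householder_e0_minus householder_orthogonal by (simp_all add: uniform_reflection_def)
  then show "uniform_reflection n L 0 i = uniform_vec L i"
    by (simp add: uniform_reflection_def householder_sym)
qed

definition hadamard :: "nat \<Rightarrow> nat \<Rightarrow> complex" where
  "hadamard b b' = (if b = 1 \<and> b' = 1 then -1 else 1) / complex_of_real (sqrt 2)"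

lemma of_real_sqrt_2_squared: "complex_of_real (sqrt 2) * complex_of_real (sqrt 2) = 2"
  by (simp flip: of_real_mult)

lemma hadamard_flip_col_1: "b < 2 \<Longrightarrow> hadamard (1-b) 1 = - hadamard b 1"
  by (auto dest!: less_2_cases simp: hadamard_def)

section \<open>An exact one-query algorithm for the Deutsch-Jozsa problem\<close>

definition minus_one_pow :: "bool \<Rightarrow> real" where
  "minus_one_pow p = (if p then -1 else 1)"

(* With workspace dimension 1 the basis state |l,b> has index l*2+b. The first unitary prepares
   \<Sum>\<^sub>l u\<^sub>l |l>|->, u the uniform unit vector on the first L indices; the query multiplies |l> by
   (-1)^(x\<^sub>l). The second unitary reflects again (the first row of the reflection is u) and sends
   |-> to |1> for l = 0 and to |0> otherwise, so the output bit is 1 with probability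
   (\<Sum>\<^sub>l\<^sub><\<^sub>L (-1)^(x\<^sub>l) / L)\<^sup>2. *)
definition dj_alg :: "nat \<Rightarrow> nat \<Rightarrow> nat \<Rightarrow> complex mat" where
  "dj_alg n L t = kron_mat n 2 (uniform_reflection n L)
     (if t = 0 then (\<lambda>l b b'. hadamard b (1-b'))
      else (\<lambda>l b b'. hadamard (if l = 0 then b else 1-b) b'))"

lemma dj_alg_valid:
  assumes "2 \<le> L" "L \<le> n"
  shows "qalg_valid n 1 1 (dj_alg n L)"
proof -
  have G0: "(\<Sum>c<2. cnj (hadamard c (1-a)) * hadamard c (1-b)) = (if a = b then 1 else 0)"
    and G1: "(\<Sum>c<2. cnj (hadamard (if l = 0 then c else 1-c) a) *
      hadamard (if l = 0 then c else 1-c) b) = (if a = b then 1 else 0)" if "a < 2" "b < 2" for l a b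
    using that by (auto dest!: less_2_cases simp: hadamard_def sum_lessThan_2 of_real_sqrt_2_squared)
  have "unitary_mat (n*2) (dj_alg n L 0)"
    unfolding dj_alg_def if_P[OF refl] using uniform_reflection_orthogonal[OF assms] G0
    by (rule kron_mat_unitary)
  moreover have "unitary_mat (n*2) (dj_alg n L t)" if "0 < t" for t
    unfolding dj_alg_def if_not_P[OF that[THEN less_not_refl2]]
    using uniform_reflection_orthogonal[OF assms] G1
    by (rule kron_mat_unitary)
  ultimately show ?thesis
    by (simp add: qalg_valid_def qdim_def) (metis neq0_conv)
qed

lemma dj_alg_state_after_query:
  assumes "2 \<le> L" "L \<le> n" "l < n" "b < 2"
  shows "(query_op n 1 x *\<^sub>v (dj_alg n L 0 *\<^sub>v unit_vec (qdim n 1) 0)) $ (l*2+b) =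
    complex_of_real (uniform_vec L l * minus_one_pow (x!l)) * hadamard b 1"
proof -
  define b' where "b' = (if x!l then 1-b else b)"
  have "b' < 2" unfolding b'_def using assms(4) by auto
  have "(query_op n 1 x *\<^sub>v (dj_alg n L 0 *\<^sub>v unit_vec (qdim n 1) 0)) $ (l*2+b) =
      (dj_alg n L 0 *\<^sub>v unit_vec (qdim n 1) 0) $ (l*2+b')"
    using query_op_mult_vec_nth[of _ n 1 l b 0] assms
    by (simp add: b'_def dj_alg_def kron_mat_def qdim_def)
  also have "\<dots> = complex_of_real (uniform_vec L l) * hadamard b' 1"
    using kron_mat_mult_unit_vec_0[OF assms(3) \<open>b' < 2\<close>] uniform_reflection_col_0[OF assms(1,2)]
    by (simp add: dj_alg_def qdim_def)
  finally show ?thesis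
    using hadamard_flip_col_1[OF assms(4)] by (simp add: b'_def minus_one_pow_def)
qed

lemma dj_alg_amplitude:
  assumes "2 \<le> L" "L \<le> n" "l < n"
  shows "qstate n 1 (dj_alg n L) x 1 $ (l*2+1) = (if l = 0 then
    complex_of_real (\<Sum>l'<n. uniform_vec L l' * uniform_vec L l' * minus_one_pow (x!l')) else 0)"
proof -
  define s1 where "s1 = query_op n 1 x *\<^sub>v (dj_alg n L 0 *\<^sub>v unit_vec (qdim n 1) 0)"
  have "dim_vec s1 = n*2" by (simp add: s1_def query_op_def qdim_def)
  have s1_nth: "s1 $ (l*2+b) = complex_of_real (uniform_vec L l * minus_one_pow (x!l)) * hadamard b 1"
    if "l < n" "b < 2" for l b
    unfolding s1_def using assms(1,2) that by (rule dj_alg_state_after_query)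
  have "qstate n 1 (dj_alg n L) x 1 $ (l*2+1) = (dj_alg n L 1 *\<^sub>v s1) $ (l*2+1)"
    by (simp add: s1_def)
  also have "\<dots> = (\<Sum>l'<n. \<Sum>b'<2.
      complex_of_real (uniform_reflection n L l l') * hadamard (if l = 0 then 1 else 0) b' * s1 $ (l'*2+b'))"
    using assms(3) \<open>dim_vec s1 = n*2\<close> kron_mat_mult_vec_nth[of s1 n 2 l 1]
    by (simp add: dj_alg_def del: index_mult_mat_vec)
  also have "\<dots> = (\<Sum>l'<n. complex_of_real (uniform_reflection n L l l' * uniform_vec L l' *
      minus_one_pow (x!l')) * (\<Sum>b'<2. hadamard (if l = 0 then 1 else 0) b' * hadamard b' 1))"
    by (intro sum.cong refl) (simp add: s1_nth sum_distrib_left mult_ac)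
  also have "\<dots> = (if l = 0 then
      complex_of_real (\<Sum>l'<n. uniform_vec L l' * uniform_vec L l' * minus_one_pow (x!l')) else 0)"
    using uniform_reflection_row_0[OF assms(1,2)]
    by (simp add: hadamard_def sum_lessThan_2 of_real_sqrt_2_squared)
  finally show ?thesis .
qed

lemma qprob1_dj_alg:
  assumes "2 \<le> L" "L \<le> n"
  shows "qprob1 n 1 (dj_alg n L) 1 x = ((\<Sum>l<L. minus_one_pow (x!l)) / real L)\<^sup>2"
proof -
  define A where "A = (\<Sum>l<n. uniform_vec L l * uniform_vec L l * minus_one_pow (x!l))"
  have "qprob1 n 1 (dj_alg n L) 1 x =
      (\<Sum>l<n. \<Sum>z<1. (cmod (qstate n 1 (dj_alg n L) x 1 $ ((l*2+1)*1+z)))\<^sup>2)"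
    by (rule qprob1_eq_sum_amplitudes)
  also have "\<dots> = (\<Sum>l<n. if l = 0 then A\<^sup>2 else 0)"
    using assms by (intro sum.cong refl)
      (simp add: dj_alg_amplitude A_def norm_of_real
        del: One_nat_def qstate.simps of_real_sum of_real_mult)
  also have "\<dots> = A\<^sup>2" using assms by simp
  also have "A = (\<Sum>l<L. minus_one_pow (x!l) / real L)"
    unfolding A_def using assms
    by (intro sum.mono_neutral_cong_right) (auto simp: uniform_vec_def)
  finally show ?thesis by (simp add: sum_divide_distrib)
qed

(* hadamard_bit k a i is the inner product mod 2 of the k-bit binary expansions of a and i. *)
primrec hadamard_bit :: "nat \<Rightarrow> nat \<Rightarrow> nat \<Rightarrow> bool" where
  "hadamard_bit 0 a i = False"
| "hadamard_bit (Suc k) a i = (hadamard_bit k (a mod 2^k) (i mod 2^k) \<noteq> (2^k \<le> a \<and> 2^k \<le> i))"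

lemma hadamard_bit_balanced:
  "a < 2^k \<Longrightarrow> b < 2^k \<Longrightarrow> a \<noteq> b \<Longrightarrow>
    (\<Sum>i<2^k. minus_one_pow (hadamard_bit k a i \<noteq> hadamard_bit k b i)) = 0"
proof (induction k arbitrary: a b)
  case 0
  then show ?case by simp
next
  case (Suc k)
  define A B where "A = a mod 2^k" and "B = b mod 2^k"
  define \<alpha> \<beta> where "\<alpha> = (2^k \<le> a)" and "\<beta> = (2^k \<le> b)"
  define \<sigma> where "\<sigma> = (\<Sum>i<2^k. minus_one_pow (hadamard_bit k A i \<noteq> hadamard_bit k B i))"
  have flip: "minus_one_pow ((p \<noteq> \<alpha>) \<noteq> (q \<noteq> \<beta>)) =
      (if \<alpha> = \<beta> then minus_one_pow (p \<noteq> q) else - minus_one_pow (p \<noteq> q))" for p q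
    by (cases \<alpha>; cases \<beta>; cases p; cases q) (simp_all add: minus_one_pow_def)
  have "(\<Sum>i<2^Suc k. minus_one_pow (hadamard_bit (Suc k) a i \<noteq> hadamard_bit (Suc k) b i)) =
      (\<Sum>h<2. \<Sum>i<2^k. minus_one_pow (hadamard_bit (Suc k) a (h*2^k+i) \<noteq> hadamard_bit (Suc k) b (h*2^k+i)))"
    using sum_lessThan_mult[of "\<lambda>i. minus_one_pow (hadamard_bit (Suc k) a i \<noteq> hadamard_bit (Suc k) b i)" 2 "2^k"]
    by (simp add: mult.commute)
  also have "\<dots> = \<sigma> + (\<Sum>i<2^k. minus_one_pow ((hadamard_bit k A i \<noteq> \<alpha>) \<noteq> (hadamard_bit k B i \<noteq> \<beta>)))"
    by (simp add: numeral_2_eq_2 A_def B_def \<alpha>_def \<beta>_def \<sigma>_def)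
  also have "(\<Sum>i<2^k. minus_one_pow ((hadamard_bit k A i \<noteq> \<alpha>) \<noteq> (hadamard_bit k B i \<noteq> \<beta>))) =
      (if \<alpha> = \<beta> then \<sigma> else - \<sigma>)"
    unfolding \<sigma>_def flip by (simp add: sum_negf)
  finally have sum_eq: "(\<Sum>i<2^Suc k. minus_one_pow (hadamard_bit (Suc k) a i \<noteq> hadamard_bit (Suc k) b i)) =
      \<sigma> + (if \<alpha> = \<beta> then \<sigma> else - \<sigma>)" .
  show ?case
  proof (cases "\<alpha> = \<beta>")
    case True
    have "a = (if \<alpha> then 2^k else 0) + A" "b = (if \<beta> then 2^k else 0) + B"
      using Suc.prems(1,2) by (auto simp: A_def B_def \<alpha>_def \<beta>_def le_mod_geq)
    then have "A \<noteq> B" using True Suc.prems(3) by auto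
    then have "\<sigma> = 0" using Suc.IH[of A B] by (simp add: A_def B_def \<sigma>_def)
    then show ?thesis using sum_eq by simp
  next
    case False
    then show ?thesis using sum_eq by simp
  qed
qed

definition hadamard_word :: "nat \<Rightarrow> nat \<Rightarrow> nat \<Rightarrow> bool list" where
  "hadamard_word k n a = map (\<lambda>i. i < 2^k \<and> hadamard_bit k a i) [0..<n]"

definition dj_fun :: "nat \<Rightarrow> bool list \<Rightarrow> bool" where
  "dj_fun L z \<longleftrightarrow> (\<forall>l<L. \<not> z!l)"

definition dj_promise :: "nat \<Rightarrow> nat \<Rightarrow> bool list set" where
  "dj_promise n L = {z. length z = n \<and> (dj_fun L z \<or> (\<Sum>l<L. minus_one_pow (z!l)) = 0)}"

lemma dj_alg_exact:
  assumes "2 \<le> L" "L \<le> n"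
  shows "exact_comp (dj_promise n L) (dj_fun L) (qprob1 n 1 (dj_alg n L) 1)"
proof -
  have "(\<Sum>l<L. minus_one_pow (z!l)) = real L" if "dj_fun L z" for z
    using that by (simp add: dj_fun_def minus_one_pow_def)
  then show ?thesis
    unfolding exact_comp_def qprob1_dj_alg[OF assms] using assms by (auto simp: dj_promise_def)
qed

lemma nondet_comp_if_exact_comp: "exact_comp Dom G p \<Longrightarrow> nondet_comp Dom G p"
  by (simp add: exact_comp_def nondet_comp_def)

lemma hadamard_words_xor_dj:
  assumes "2^k \<le> n" "a < 2^k" "b < 2^k"
  shows "(hadamard_word k n a, hadamard_word k n b) \<in> xor_dom n (dj_promise n (2^k))"
    and "xor_fun (dj_fun (2^k)) (hadamard_word k n a, hadamard_word k n b) \<longleftrightarrow> a = b"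
proof -
  define z where "z = xor_list (hadamard_word k n a) (hadamard_word k n b)"
  have z: "length z = n" "\<And>l. l < 2^k \<Longrightarrow> z!l = (hadamard_bit k a l \<noteq> hadamard_bit k b l)"
    using assms(1) by (auto simp: z_def xor_list_def hadamard_word_def)
  have balanced: "(\<Sum>l<2^k. minus_one_pow (z!l)) = 0" if "a \<noteq> b"
    using hadamard_bit_balanced[OF assms(2,3) that] by (simp add: z)
  have iff: "dj_fun (2^k) z \<longleftrightarrow> a = b"
  proof
    assume "dj_fun (2^k) z"
    then have "(\<Sum>l<2^k. minus_one_pow (z!l)) = 2^k" by (simp add: dj_fun_def minus_one_pow_def)
    then show "a = b" using balanced by fastforce
  qed (simp add: dj_fun_def z)
  have "z \<in> dj_promise n (2^k)" using balanced iff z(1) by (auto simp: dj_promise_def)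
  then show "(hadamard_word k n a, hadamard_word k n b) \<in> xor_dom n (dj_promise n (2^k))"
    by (simp add: xor_dom_def hadamard_word_def z_def)
  show "xor_fun (dj_fun (2^k)) (hadamard_word k n a, hadamard_word k n b) \<longleftrightarrow> a = b"
    using iff by (simp add: xor_fun_def z_def)
qed

section \<open>An unbounded-error one-query algorithm for OR\<close>

definition or_bias :: "nat \<Rightarrow> real" where
  "or_bias n = 1/2 - 1/(4 * real n)"

definition or_rotation :: "real \<Rightarrow> nat \<Rightarrow> nat \<Rightarrow> complex" where
  "or_rotation q c c' = complex_of_real
     (if c = c' then (if c = 1 \<or> c = 2 then 1 else sqrt (1 - q))
      else if c = 3 \<and> c' = 0 then sqrt q else if c = 0 \<and> c' = 3 then - sqrt q else 0)"

(* With workspace dimension 2 the basis state |l,b,z> has index (l*2+b)*2+z = l*4+(b*2+z). The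
   first unitary prepares the uniform superposition of the |l,0,0>, the query moves |l,0,0> to
   |l,1,0> iff x\<^sub>l, and the second unitary rotates |l,0,0> into \<surd>(1-q)|l,0,0> + \<surd>q|l,1,1>
   for the bias q = or_bias n < 1/2. So the output bit is 1 with probability
   (|x| + (n - |x|) q) / n, which exceeds 1/2 exactly when |x| \<ge> 1. *)
definition or_alg :: "nat \<Rightarrow> nat \<Rightarrow> complex mat" where
  "or_alg n t = (if t = 0 then kron_mat n 4 (uniform_reflection n n) (\<lambda>l c c'. if c = c' then 1 else 0)
     else kron_mat n 4 (\<lambda>l l'. if l = l' then 1 else 0) (\<lambda>l. or_rotation (or_bias n)))"

lemma or_rotation_orthogonal:
  assumes "0 \<le> q" "q \<le> 1" "a < 4" "b < 4"
  shows "(\<Sum>c<4. cnj (or_rotation q c a) * or_rotation q c b) = (if a = b then 1 else 0)"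
proof -
  have "sqrt (1 - q) * sqrt (1 - q) + sqrt q * sqrt q = 1" using assms(1,2) by simp
  then have "complex_of_real (sqrt (1 - q)) * complex_of_real (sqrt (1 - q)) +
      complex_of_real (sqrt q) * complex_of_real (sqrt q) = 1"
    by (simp flip: of_real_mult of_real_add)
  then show ?thesis
    using less_4_cases[OF assms(3)] less_4_cases[OF assms(4)]
    by (auto simp: or_rotation_def sum_lessThan_4 algebra_simps)
qed

lemma or_alg_valid:
  assumes "2 \<le> n"
  shows "qalg_valid n 2 1 (or_alg n)"
proof -
  have "0 \<le> or_bias n" "or_bias n \<le> 1" using assms by (auto simp: or_bias_def field_simps)
  have "unitary_mat (n*4) (or_alg n 0)"
    unfolding or_alg_def if_P[OF refl] using uniform_reflection_orthogonal[of n n]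
    by (intro kron_mat_unitary) (use assms in \<open>auto simp: if_distrib cong: if_cong\<close>)
  moreover have "unitary_mat (n*4) (or_alg n t)" if "0 < t" for t
    unfolding or_alg_def if_not_P[OF that[THEN less_not_refl2]]
    using or_rotation_orthogonal[OF \<open>0 \<le> or_bias n\<close> \<open>or_bias n \<le> 1\<close>]
    by (intro kron_mat_unitary) (auto simp: if_distrib cong: if_cong)
  ultimately show ?thesis
    by (simp add: qalg_valid_def qdim_def mult.commute) (metis neq0_conv)
qed

lemma or_alg_state_after_query:
  assumes "2 \<le> n" "l < n" "c < 4"
  shows "(query_op n 2 x *\<^sub>v (or_alg n 0 *\<^sub>v unit_vec (qdim n 2) 0)) $ (l*4+c) =
    complex_of_real (uniform_vec n l) * (if c = (if x!l then 2 else 0) then 1 else 0)"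
proof -
  define b z where "b = c div 2" and "z = c mod 2"
  define b' where "b' = (if x!l then 1-b else b)"
  have bz: "b < 2" "z < 2" "b' < 2" using assms(3) by (auto simp: b_def z_def b'_def)
  have idx: "l*4+c = (l*2+b)*2+z" "(l*2+b')*2+z = l*4+(b'*2+z)"
    by (simp_all add: b_def z_def)
  have q: "qdim n 2 = n*4" by (simp add: qdim_def)
  have dim: "dim_vec (or_alg n 0 *\<^sub>v unit_vec (qdim n 2) 0) = qdim n 2"
    by (simp add: or_alg_def kron_mat_def q)
  have "(query_op n 2 x *\<^sub>v (or_alg n 0 *\<^sub>v unit_vec (qdim n 2) 0)) $ (l*4+c) =
      (or_alg n 0 *\<^sub>v unit_vec (qdim n 2) 0) $ ((l*2+b')*2+z)"
    unfolding idx(1) b'_def by (rule query_op_mult_vec_nth[OF dim assms(2) bz(1,2)])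
  also have "\<dots> = (kron_mat n 4 (uniform_reflection n n) (\<lambda>l c c'. if c = c' then 1 else 0) *\<^sub>v
      unit_vec (n*4) 0) $ (l*4+(b'*2+z))"
    unfolding idx(2) q or_alg_def if_P[OF refl] ..
  also have "\<dots> = complex_of_real (uniform_vec n l) * (if b'*2+z = 0 then 1 else 0)"
    using assms bz uniform_reflection_col_0[of n n] by (simp add: kron_mat_mult_unit_vec_0)
  also have "(b'*2+z = 0) = (c = (if x!l then 2 else 0))"
    using less_4_cases[OF assms(3)] by (auto simp: b'_def b_def z_def)
  finally show ?thesis .
qed

lemma or_alg_amplitude:
  assumes "2 \<le> n" "l < n" "c < 4"
  shows "qstate n 2 (or_alg n) x 1 $ (l*4+c) =
    or_rotation (or_bias n) c (if x!l then 2 else 0) * uniform_vec n l"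
proof -
  define s1 where "s1 = query_op n 2 x *\<^sub>v (or_alg n 0 *\<^sub>v unit_vec (qdim n 2) 0)"
  have "dim_vec s1 = n*4" by (simp add: s1_def query_op_def qdim_def)
  have s1_nth: "s1 $ (l*4+c') = complex_of_real (uniform_vec n l) * (if c' = (if x!l then 2 else 0) then 1 else 0)"
    if "c' < 4" for c'
    unfolding s1_def using assms(1,2) that by (rule or_alg_state_after_query)
  have "qstate n 2 (or_alg n) x 1 $ (l*4+c) = (or_alg n 1 *\<^sub>v s1) $ (l*4+c)"
    by (simp add: s1_def)
  also have "\<dots> = (\<Sum>l'<n. \<Sum>c'<4. complex_of_real (if l = l' then 1 else 0) *
      or_rotation (or_bias n) c c' * s1 $ (l'*4+c'))"
    using assms(2,3) \<open>dim_vec s1 = n*4\<close> kron_mat_mult_vec_nth[of s1 n 4 l c]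
    by (simp add: or_alg_def del: index_mult_mat_vec)
  also have "\<dots> = (\<Sum>l'<n. if l' = l then (\<Sum>c'<4. or_rotation (or_bias n) c c' * s1 $ (l*4+c')) else 0)"
    by (intro sum.cong refl) auto
  also have "\<dots> = (\<Sum>c'<4. or_rotation (or_bias n) c c' * s1 $ (l*4+c'))"
    using assms(2) by simp
  also have "\<dots> = or_rotation (or_bias n) c (if x!l then 2 else 0) * uniform_vec n l"
    by (simp add: s1_nth if_distrib[of "\<lambda>z. _ * z"] cong: if_cong)
  finally show ?thesis .
qed

lemma qprob1_or_alg:
  assumes "2 \<le> n"
  shows "qprob1 n 2 (or_alg n) 1 x = (\<Sum>l<n. if x!l then 1 else or_bias n) / real n"
proof -
  have "0 \<le> or_bias n" using assms by (simp add: or_bias_def field_simps)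
  have "qprob1 n 2 (or_alg n) 1 x =
      (\<Sum>l<n. \<Sum>z<2. (cmod (qstate n 2 (or_alg n) x 1 $ ((l*2+1)*2+z)))\<^sup>2)"
    by (rule qprob1_eq_sum_amplitudes)
  also have "\<dots> = (\<Sum>l<n. (if x!l then 1 else or_bias n) / real n)"
  proof (intro sum.cong refl)
    fix l assume "l \<in> {..<n}"
    then have "l < n" by simp
    have idx: "(l*2+1)*2+0 = l*4+2" "(l*2+1)*2+1 = l*4+3" by simp_all
    have amp2: "qstate n 2 (or_alg n) x 1 $ (l*4+2) =
        or_rotation (or_bias n) 2 (if x!l then 2 else 0) * uniform_vec n l"
      and amp3: "qstate n 2 (or_alg n) x 1 $ (l*4+3) =
        or_rotation (or_bias n) 3 (if x!l then 2 else 0) * uniform_vec n l"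
      using assms \<open>l < n\<close> by (intro or_alg_amplitude; simp)+
    have "(uniform_vec n l)\<^sup>2 = 1 / real n" using \<open>l < n\<close> by (simp add: uniform_vec_def power_divide)
    then show "(\<Sum>z<2. (cmod (qstate n 2 (or_alg n) x 1 $ ((l*2+1)*2+z)))\<^sup>2) =
        (if x!l then 1 else or_bias n) / real n"
      unfolding sum_lessThan_2 idx amp2 amp3
      using \<open>0 \<le> or_bias n\<close>
      by (simp add: or_rotation_def norm_mult power_mult_distrib)
  qed
  finally show ?thesis by (simp add: sum_divide_distrib)
qed

definition or_fun :: "bool list \<Rightarrow> bool" where
  "or_fun z \<longleftrightarrow> (\<exists>l<length z. z!l)"

lemma or_alg_unbounded:
  assumes "2 \<le> n"
  shows "unbounded_comp {x. length x = n} or_fun (qprob1 n 2 (or_alg n) 1)"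
  unfolding unbounded_comp_def
proof (intro ballI)
  fix x :: "bool list" assume "x \<in> {x. length x = n}"
  then have "length x = n" by simp
  define q where "q = or_bias n"
  have "0 < real n" using assms by simp
  have "q < 1/2" using \<open>0 < real n\<close> by (simp add: q_def or_bias_def)
  then have q: "q < 1/2" "q \<le> 1" by simp_all
  have p: "qprob1 n 2 (or_alg n) 1 x = (\<Sum>l<n. if x!l then 1 else q) / real n"
    unfolding q_def by (rule qprob1_or_alg[OF assms])
  have "(\<Sum>l<n. if x!l then 1 else q) / real n > 1/2" if "or_fun x"
  proof -
    obtain l0 where l0: "l0 < n" "x!l0" using \<open>or_fun x\<close> \<open>length x = n\<close> by (auto simp: or_fun_def)
    have "real n * q + (1 - q) = (\<Sum>l<n. q + (if l = l0 then 1 - q else 0))"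
      using l0 by (simp add: sum.distrib)
    also have "\<dots> \<le> (\<Sum>l<n. if x!l then 1 else q)"
      using l0 q by (intro sum_mono) auto
    finally have "real n * q + (1 - q) \<le> (\<Sum>l<n. if x!l then 1 else q)" .
    moreover have "real n / 2 < real n * q + (1 - q)"
      using \<open>0 < real n\<close> by (simp add: q_def or_bias_def field_simps add_pos_pos)
    ultimately show ?thesis using \<open>0 < real n\<close> by (simp add: field_simps)
  qed
  moreover have "(\<Sum>l<n. if x!l then 1 else q) / real n = q" if "\<not> or_fun x"
    using that \<open>length x = n\<close> \<open>0 < real n\<close> by (simp add: or_fun_def)
  ultimately show "if or_fun x then qprob1 n 2 (or_alg n) 1 x > 1/2 else 1 - qprob1 n 2 (or_alg n) 1 x > 1/2"
    unfolding p using q by auto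
qed

section \<open>Communication lower bounds\<close>

lemma nmsg_lower_bound_xor_dj:
  assumes "2^k \<le> n"
    and P: "nondet_comp (xor_dom n (dj_promise n (2^k))) (xor_fun (dj_fun (2^k))) (pprob1 P)"
  shows "(2::nat)^k \<le> 2 * 4^nmsg P"
proof -
  obtain J :: "(nat \<times> nat \<times> bool) set" and \<alpha> \<beta> where J: "finite J" "card J = 2 * 4^nmsg P"
    and factor: "\<And>x y. pprob1 P (x,y) = (\<Sum>j\<in>J. \<alpha> j x * \<beta> j y)"
    using pprob1_factorization[of P] by blast
  have "pprob1 P (hadamard_word k n a, hadamard_word k n b) = 0 \<longleftrightarrow> a \<noteq> b"
    if "a < 2^k" "b < 2^k" for a b
  proof -
    have "0 < pprob1 P (hadamard_word k n a, hadamard_word k n b) \<longleftrightarrow> a = b"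
      using P hadamard_words_xor_dj[OF assms(1) that] unfolding nondet_comp_def by blast
    then show ?thesis using pprob1_nonneg[of P "(hadamard_word k n a, hadamard_word k n b)"] by auto
  qed
  then have "card {..<(2::nat)^k} \<le> card J"
    by (intro card_le_of_diagonal_product[of J _ "\<lambda>j a. \<alpha> j (hadamard_word k n a)"
          "\<lambda>j b. \<beta> j (hadamard_word k n b)"]) (auto simp: J(1) simp flip: factor)
  then show ?thesis using J(2) by simp
qed

lemma nmsg_lower_bound_and_or:
  assumes P: "unbounded_comp (and_dom n) (and_fun or_fun) (pprob1 P)"
  shows "n \<le> 2 * 4^nmsg P + 1"
proof -
  obtain J :: "(nat \<times> nat \<times> bool) set" and \<alpha> \<beta> where J: "finite J" "card J = 2 * 4^nmsg P"
    and factor: "\<And>x y. pprob1 P (x,y) = (\<Sum>j\<in>J. \<alpha> j x * \<beta> j y)"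
    using pprob1_factorization[of P] by blast
  define e where "e i = map (\<lambda>l. l = i) [0..<n]" for i
  define x where "x S = map (\<lambda>l. l \<in> S) [0..<n]" for S
  have "(i \<in> S \<longrightarrow> pprob1 P (x S, e i) > 1/2) \<and> (i \<notin> S \<longrightarrow> pprob1 P (x S, e i) < 1/2)"
    if "i < n" for S i
  proof -
    have "(x S, e i) \<in> and_dom n" by (simp add: and_dom_def x_def e_def)
    moreover have "and_fun or_fun (x S, e i) \<longleftrightarrow> i \<in> S"
      using that by (auto simp: and_fun_def and_list_def or_fun_def x_def e_def)
    ultimately show ?thesis using P unfolding unbounded_comp_def by fastforce
  qed
  then have "n \<le> card J + 1"
    by (intro card_le_of_all_sign_patterns[of J n \<alpha> "\<lambda>j i. \<beta> j (e i)"])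
      (auto simp: J(1) simp flip: factor)
  then show ?thesis using J(2) by simp
qed

lemma log_lower_bound:
  fixes D :: "nat \<Rightarrow> real"
  assumes "0 < C" and cost: "\<And>n. 16 \<le> n \<Longrightarrow> \<exists>t. real t \<le> C * D n \<and> n < 4^(t+1)"
  shows "\<exists>c>0. \<exists>N0. \<forall>n\<ge>N0. D n \<ge> c * ln (real n)"
proof (intro exI[of _ "1 / (2 * C * ln 4)"] conjI exI[of _ 16] allI impI)
  show "0 < 1 / (2 * C * ln 4)" using assms(1) by simp
  fix n :: nat assume "16 \<le> n"
  then obtain t where t: "real t \<le> C * D n" "n < 4^(t+1)" using cost by blast
  have "real n < 4^(t+1)" using t(2) by (metis of_nat_less_iff of_nat_numeral of_nat_power)
  then have "ln (real n) < ln (4^(t+1))" using \<open>16 \<le> n\<close> by simp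
  moreover have "ln ((4::real)^(t+1)) = (real t + 1) * ln 4" using ln_realpow[of 4 "t+1"] by simp
  ultimately have "ln (real n) < (real t + 1) * ln 4" by simp
  moreover have "ln 16 \<le> ln (real n)" using \<open>16 \<le> n\<close> by simp
  then have "2 * ln 4 \<le> ln (real n)" using ln_realpow[of 4 2] by simp
  ultimately have "ln (real n) / (2 * ln 4) \<le> real t" by (simp add: field_simps)
  also have "\<dots> \<le> C * D n" by (rule t(1))
  finally show "1 / (2 * C * ln 4) * ln (real n) \<le> D n" using assms(1) by (simp add: field_simps)
qed

lemma dj_simulation_log_bound:
  fixes D :: "nat \<Rightarrow> real"
  assumes "0 < C"
    and sim: "\<And>n L. 2 \<le> L \<Longrightarrow> L \<le> n \<Longrightarrow> \<exists>P.
      nondet_comp (xor_dom n (dj_promise n L)) (xor_fun (dj_fun L)) (pprob1 P) \<and> real (nmsg P) \<le> C * D n"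
  shows "\<exists>c>0. \<exists>N0. \<forall>n\<ge>N0. D n \<ge> c * ln (real n)"
proof (rule log_lower_bound[OF assms(1)])
  fix n :: nat assume "16 \<le> n"
  then obtain k where k: "2^k \<le> n" "n < 2^(k+1)" using ex_power_ivl1[of 2 n] by auto
  then have "2 \<le> (2::nat)^k" using \<open>16 \<le> n\<close> by (cases k) auto
  then obtain P where P: "nondet_comp (xor_dom n (dj_promise n (2^k))) (xor_fun (dj_fun (2^k))) (pprob1 P)"
    "real (nmsg P) \<le> C * D n"
    using sim k(1) by blast
  have "(2::nat)^k \<le> 2 * 4^nmsg P" using k(1) P(1) by (rule nmsg_lower_bound_xor_dj)
  then have "n < 4^(nmsg P + 1)" using k(2) by simp
  then show "\<exists>t. real t \<le> C * D n \<and> n < 4^(t+1)" using P(2) by blast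
qed

lemma or_simulation_log_bound:
  fixes D :: "nat \<Rightarrow> real"
  assumes "0 < C"
    and sim: "\<And>n. 2 \<le> n \<Longrightarrow> \<exists>P.
      unbounded_comp (and_dom n) (and_fun or_fun) (pprob1 P) \<and> real (nmsg P) \<le> C * D n"
  shows "\<exists>c>0. \<exists>N0. \<forall>n\<ge>N0. D n \<ge> c * ln (real n)"
proof (rule log_lower_bound[OF assms(1)])
  fix n :: nat assume "16 \<le> n"
  then obtain P where P: "unbounded_comp (and_dom n) (and_fun or_fun) (pprob1 P)" "real (nmsg P) \<le> C * D n"
    using sim[of n] by auto
  have "n \<le> 2 * 4^nmsg P + 1" using P(1) by (rule nmsg_lower_bound_and_or)
  moreover have "1 \<le> (4::nat)^nmsg P" by simp
  ultimately have "n < 4 * 4^nmsg P" by linarith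
  then have "n < 4^(nmsg P + 1)" by simp
  then show "\<exists>t. real t \<le> C * D n \<and> n < 4^(t+1)" using P(2) by blast
qed

lemma nondet_simulation_log_bound:
  fixes D :: "nat \<Rightarrow> real"
  assumes "0 < C"
    and "\<forall>n X F T m U. X \<subseteq> {x. length x = n} \<and> qalg_valid n m T U \<and>
          nondet_comp X F (qprob1 n m U T) \<longrightarrow>
          (\<exists>P. qprot_valid n P \<and> nondet_comp (xor_dom n X) (xor_fun F) (pprob1 P) \<and>
               real (nmsg P) \<le> C * D n * real T)"
  shows "\<exists>c>0. \<exists>N0. \<forall>n\<ge>N0. D n \<ge> c * ln (real n)"
proof (rule dj_simulation_log_bound[OF assms(1)])
  fix n L :: nat assume L: "2 \<le> L" "L \<le> n"
  have "dj_promise n L \<subseteq> {x. length x = n}" by (auto simp: dj_promise_def)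
  then have "\<exists>P. qprot_valid n P \<and> nondet_comp (xor_dom n (dj_promise n L)) (xor_fun (dj_fun L)) (pprob1 P) \<and>
      real (nmsg P) \<le> C * D n * real (1::nat)"
    using assms(2) dj_alg_valid[OF L] nondet_comp_if_exact_comp[OF dj_alg_exact[OF L]] by blast
  then show "\<exists>P. nondet_comp (xor_dom n (dj_promise n L)) (xor_fun (dj_fun L)) (pprob1 P) \<and>
      real (nmsg P) \<le> C * D n"
    by auto
qed

lemma exact_simulation_log_bound:
  fixes D :: "nat \<Rightarrow> real"
  assumes "0 < C"
    and "\<forall>n X F T m U. X \<subseteq> {x. length x = n} \<and> qalg_valid n m T U \<and>
          exact_comp X F (qprob1 n m U T) \<longrightarrow>
          (\<exists>P. qprot_valid n P \<and> exact_comp (xor_dom n X) (xor_fun F) (pprob1 P) \<and>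
               real (nmsg P) \<le> C * D n * real T)"
  shows "\<exists>c>0. \<exists>N0. \<forall>n\<ge>N0. D n \<ge> c * ln (real n)"
proof (rule dj_simulation_log_bound[OF assms(1)])
  fix n L :: nat assume L: "2 \<le> L" "L \<le> n"
  have "dj_promise n L \<subseteq> {x. length x = n}" by (auto simp: dj_promise_def)
  then have "\<exists>P. qprot_valid n P \<and> exact_comp (xor_dom n (dj_promise n L)) (xor_fun (dj_fun L)) (pprob1 P) \<and>
      real (nmsg P) \<le> C * D n * real (1::nat)"
    using assms(2) dj_alg_valid[OF L] dj_alg_exact[OF L] by blast
  then show "\<exists>P. nondet_comp (xor_dom n (dj_promise n L)) (xor_fun (dj_fun L)) (pprob1 P) \<and>
      real (nmsg P) \<le> C * D n"
    by (auto intro: nondet_comp_if_exact_comp)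
qed

lemma unbounded_simulation_log_bound:
  fixes D :: "nat \<Rightarrow> real"
  assumes "0 < C"
    and "\<forall>n F T m U. qalg_valid n m T U \<and> unbounded_comp {x. length x = n} F (qprob1 n m U T) \<longrightarrow>
          (\<exists>P. qprot_valid n P \<and> unbounded_comp (and_dom n) (and_fun F) (pprob1 P) \<and>
               real (nmsg P) \<le> C * D n * real T)"
  shows "\<exists>c>0. \<exists>N0. \<forall>n\<ge>N0. D n \<ge> c * ln (real n)"
proof (rule or_simulation_log_bound[OF assms(1)])
  fix n :: nat assume "2 \<le> n"
  then have "\<exists>P. qprot_valid n P \<and> unbounded_comp (and_dom n) (and_fun or_fun) (pprob1 P) \<and>
      real (nmsg P) \<le> C * D n * real (1::nat)"
    using assms(2) or_alg_valid or_alg_unbounded by blast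
  then show "\<exists>P. unbounded_comp (and_dom n) (and_fun or_fun) (pprob1 P) \<and> real (nmsg P) \<le> C * D n"
    by auto
qed

theorem theorem4:
  shows
  "(\<forall>(D :: nat \<Rightarrow> real) (C :: real).
      (\<forall>n. D n > 0) \<and> C > 0 \<and>
      (\<forall>n X F T m U. X \<subseteq> {x. length x = n} \<and> qalg_valid n m T U \<and>
          nondet_comp X F (qprob1 n m U T) \<longrightarrow>
          (\<exists>P. qprot_valid n P \<and> nondet_comp (xor_dom n X) (xor_fun F) (pprob1 P) \<and>
               real (nmsg P) \<le> C * D n * real T))
      \<longrightarrow> (\<exists>c > 0. \<exists>N0. \<forall>n \<ge> N0. D n \<ge> c * ln (real n)))
   \<and>
   (\<forall>(D :: nat \<Rightarrow> real) (C :: real).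
      (\<forall>n. D n > 0) \<and> C > 0 \<and>
      (\<forall>n X F T m U. X \<subseteq> {x. length x = n} \<and> qalg_valid n m T U \<and>
          exact_comp X F (qprob1 n m U T) \<longrightarrow>
          (\<exists>P. qprot_valid n P \<and> exact_comp (xor_dom n X) (xor_fun F) (pprob1 P) \<and>
               real (nmsg P) \<le> C * D n * real T))
      \<longrightarrow> (\<exists>c > 0. \<exists>N0. \<forall>n \<ge> N0. D n \<ge> c * ln (real n)))
   \<and>
   (\<forall>(D :: nat \<Rightarrow> real) (C :: real).
      (\<forall>n. D n > 0) \<and> C > 0 \<and>
      (\<forall>n F T m U. qalg_valid n m T U \<and>
          unbounded_comp {x. length x = n} F (qprob1 n m U T) \<longrightarrow>
          (\<exists>P. qprot_valid n P \<and> unbounded_comp (and_dom n) (and_fun F) (pprob1 P) \<and>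
               real (nmsg P) \<le> C * D n * real T))
      \<longrightarrow> (\<exists>c > 0. \<exists>N0. \<forall>n \<ge> N0. D n \<ge> c * ln (real n)))"
  by (intro conjI allI impI; elim conjE)
    (simp_all only: nondet_simulation_log_bound exact_simulation_log_bound unbounded_simulation_log_bound)

end
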